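(* Let $n\geq3$, let $\sigma:\mathbb{R}\to\mathbb{R}$ be an increasing odd homeomorphism, let $1\leq i<j\leq n$, and let $B\subset\mathbb{R}^n$ be such that $x_ix_j<0$ for all $x=(x_1,\dots,x_n)\in B$ and the closure of $B$ contains a point $p=(p_1,\dots,p_n)$ with $p_i=p_j=0$. Then the closure of $\mathcal M(\sigma,n)B$ contains $Q_{i,j}=\{(x_1,\dots,x_n)\in\mathbb{R}^n:x_ix_j>0\}$.
   Context: For $1\leq k<l\leq n$ define $h_{k,l},v_{k,l}:\mathbb{R}^n\to\mathbb{R}^n$ by $h_{k,l}(x)=x+\sigma^{-1}(x_l)e_k$ and $v_{k,l}(x)=x+\sigma(x_k)e_l$, where $(e_k)$ is the standard basis. $\mathcal M(\sigma,n)$ is the monoid (containing the identity) generated by all $h_{k,l},v_{k,l}$, and $\mathcal M(\sigma,n)B=\{m(x):m\in\mathcal M(\sigma,n),x\in B\}$. *)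

theory Defs
  imports "HOL-Analysis.Analysis"
begin

text \<open>R^n is represented by functions nat => real vanishing outside the index set {1..n};
 the topology is the product topology on nat => real (on this closed subspace it is the
 Euclidean one).\<close>

definition Rn :: "nat \<Rightarrow> (nat \<Rightarrow> real) set" where
  "Rn n = {x. \<forall>k. k \<notin> {1..n} \<longrightarrow> x k = 0}"

definition hmap :: "(real \<Rightarrow> real) \<Rightarrow> nat \<Rightarrow> nat \<Rightarrow> (nat \<Rightarrow> real) \<Rightarrow> (nat \<Rightarrow> real)" where
  "hmap \<sigma> k l x = x(k := x k + inv \<sigma> (x l))"

definition vmap :: "(real \<Rightarrow> real) \<Rightarrow> nat \<Rightarrow> nat \<Rightarrow> (nat \<Rightarrow> real) \<Rightarrow> (nat \<Rightarrow> real)" where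
  "vmap \<sigma> k l x = x(l := x l + \<sigma> (x k))"

inductive_set Mon :: "(real \<Rightarrow> real) \<Rightarrow> nat \<Rightarrow> ((nat \<Rightarrow> real) \<Rightarrow> (nat \<Rightarrow> real)) set"
  for \<sigma> :: "real \<Rightarrow> real" and n :: nat where
  Mon_id: "id \<in> Mon \<sigma> n"
| Mon_h: "\<lbrakk>f \<in> Mon \<sigma> n; 1 \<le> k; k < l; l \<le> n\<rbrakk> \<Longrightarrow> hmap \<sigma> k l \<circ> f \<in> Mon \<sigma> n"
| Mon_v: "\<lbrakk>f \<in> Mon \<sigma> n; 1 \<le> k; k < l; l \<le> n\<rbrakk> \<Longrightarrow> vmap \<sigma> k l \<circ> f \<in> Mon \<sigma> n"

definition MonImg :: "(real \<Rightarrow> real) \<Rightarrow> nat \<Rightarrow> (nat \<Rightarrow> real) set \<Rightarrow> (nat \<Rightarrow> real) set" where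
  "MonImg \<sigma> n B = {m x | m x. m \<in> Mon \<sigma> n \<and> x \<in> B}"

end

(*
  The closure C of M(sigma,n)B is closed and invariant under the shears x_k := x_k + g(x_l),
  where g is sigma^-1 for k < l and sigma for k > l. Near p the set B has points whose i- and
  j-coordinates are small and of opposite signs, say y_P > 0 > y_N with {P, N} = {i, j}.
  Shearing by such a point moves every third coordinate up or down, and the N-coordinate up,
  in arbitrarily small steps; so C contains every z with z_P = 0 <= z_N. If moreover z_m < 0
  for a third index m, the P-coordinate can be shifted by all combinations a g(z_N) + b g(z_m)
  with a, b natural numbers; for z_N chosen so that the two steps have irrational ratio these
  are dense in the reals (Kronecker), so the P-coordinate is arbitrary. Shifting the
  m-coordinate back then shows that C contains the half-space x_N > 0. As sigma is odd, -C is
  shear-invariant as well, with the roles of P and N exchanged, so C also contains x_P < 0;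
  the two half-spaces cover Q_{i,j}.
*)

theory Submission
  imports Defs
begin

lemma tendsto_fun_iff:
  fixes f :: "'a \<Rightarrow> 'i \<Rightarrow> 'b::topological_space"
  shows "(f \<longlongrightarrow> l) F \<longleftrightarrow> (\<forall>i. ((\<lambda>c. f c i) \<longlongrightarrow> l i) F)"
proof -
  have "(f \<longlongrightarrow> l) F \<longleftrightarrow> limitin (product_topology (\<lambda>i. euclidean) UNIV) f l F"
    by (simp add: euclidean_product_topology)
  then show ?thesis by (simp add: limitin_componentwise)
qed

lemma uniform_approx_in_closed:
  fixes C :: "('i \<Rightarrow> real) set"
  assumes "closed C" and approx: "\<And>e. e > 0 \<Longrightarrow> \<exists>y\<in>C. \<forall>k. \<bar>y k - z k\<bar> < e"
  shows "z \<in> C"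
proof -
  have "\<forall>N. \<exists>y. y \<in> C \<and> (\<forall>k. \<bar>y k - z k\<bar> < inverse (real (Suc N)))"
    by (intro allI approx[unfolded Bex_def]) simp
  then obtain Y where Y: "\<And>N. Y N \<in> C" "\<And>N k. \<bar>Y N k - z k\<bar> < inverse (real (Suc N))"
    by (metis choice)
  have "(\<lambda>N. Y N k) \<longlonglongrightarrow> z k" for k
  proof (rule tendsto_sandwich[of "\<lambda>N. z k - inverse (real (Suc N))" _ _ "\<lambda>N. z k + inverse (real (Suc N))"])
    have "z k - inverse (real (Suc N)) \<le> Y N k \<and> Y N k \<le> z k + inverse (real (Suc N))" for N
      using Y(2)[of N k] by (simp add: abs_less_iff)
    then show "\<forall>\<^sub>F N in sequentially. z k - inverse (real (Suc N)) \<le> Y N k"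
      "\<forall>\<^sub>F N in sequentially. Y N k \<le> z k + inverse (real (Suc N))"
      by simp_all
    have "(\<lambda>N. inverse (real (Suc N))) \<longlonglongrightarrow> 0" by (rule LIMSEQ_inverse_real_of_nat)
    from tendsto_diff[OF tendsto_const this] tendsto_add[OF tendsto_const this]
    show "(\<lambda>N. z k - inverse (real (Suc N))) \<longlonglongrightarrow> z k" "(\<lambda>N. z k + inverse (real (Suc N))) \<longlonglongrightarrow> z k"
      by simp_all
  qed
  then have "Y \<longlonglongrightarrow> z" by (simp add: tendsto_fun_iff)
  then show ?thesis using Lim_in_closed_set[OF assms(1), of Y sequentially] Y(1) by simp
qed

lemma closure_approx_on_finite_coords:
  fixes B :: "('i \<Rightarrow> real) set"
  assumes "p \<in> closure B" "finite I" "e > 0"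
  shows "\<exists>y\<in>B. \<forall>k\<in>I. \<bar>y k - p k\<bar> < e"
proof -
  define U where "U = (\<Inter>k\<in>I. (\<lambda>y. y k) -` ball (p k) e)"
  have "open U" unfolding U_def using assms(2)
    by (intro open_INT ballI open_vimage) auto
  moreover have "p \<in> U" unfolding U_def using assms(3) by simp
  ultimately obtain y where "y \<in> U" "y \<in> B" using assms(1) open_Int_closure_eq_empty by blast
  then show ?thesis by (auto simp: U_def dist_real_def abs_minus_commute intro!: bexI[of _ y])
qed

lemma exists_irrational_value:
  fixes f :: "'a \<Rightarrow> real"
  assumes "inj_on f U" "uncountable U"
  shows "\<exists>u\<in>U. f u \<notin> \<rat>"
proof (rule ccontr)
  assume "\<not> ?thesis"
  then have "f ` U \<subseteq> \<rat>" by blast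
  then have "countable (f ` U)" using countable_rat countable_subset by blast
  then show False using assms countable_image_inj_on by blast
qed

lemma nat_multiple_approx:
  fixes y t g :: real
  assumes "g \<noteq> 0" and "(t - y) * g \<ge> 0"
  shows "\<exists>N::nat. \<bar>y + real N * g - t\<bar> < \<bar>g\<bar>"
proof -
  define q where "q = (t - y) / g"
  have "q \<ge> 0" using assms unfolding q_def by (simp add: zero_le_divide_iff zero_le_mult_iff)
  define N where "N = nat \<lfloor>q\<rfloor>"
  have N: "real N \<le> q" "q < real N + 1" unfolding N_def using \<open>q \<ge> 0\<close> by linarith+
  have "y + real N * g - t = (real N - q) * g"
    using assms(1) unfolding q_def by (simp add: field_simps)
  then have "\<bar>y + real N * g - t\<bar> = (q - real N) * \<bar>g\<bar>"
    using N by (simp add: abs_mult)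
  also have "\<dots> < \<bar>g\<bar>" using N assms(1) by simp
  finally show ?thesis by blast
qed

lemma nat_combination_dense:
  fixes a b t e :: real
  assumes "a > 0" "b < 0" "a / b \<notin> \<rat>" "e > 0"
  shows "\<exists>k h :: nat. \<bar>real k * a + real h * b - t\<bar> < e"
proof -
  define \<theta> where "\<theta> = - a / b"
  have "\<theta> \<notin> \<rat>"
  proof
    assume "\<theta> \<in> \<rat>"
    then have "- \<theta> \<in> \<rat>" by simp
    then show False using assms(3) by (simp add: \<theta>_def)
  qed
  have "\<theta> > 0" using divide_pos_neg[OF assms(1,2)] by (simp add: \<theta>_def)
  txt \<open>Shifting \<open>t\<close> below \<open>0\<close> by multiples of \<open>a\<close> makes the integer \<open>h\<close> supplied by Kronecker's
    theorem nonnegative.\<close>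
  obtain J :: nat where J: "t < real J * a" using ex_less_of_nat_mult[OF assms(1)] by blast
  define s where "s = (t - real J * a) / (- b)"
  have "s < 0" using divide_neg_neg[of "t - real J * a" b] J assms(2) by (simp add: s_def)
  have "min (e / - b) 1 > 0" using divide_pos_neg[OF assms(4,2)] by simp
  then obtain h k :: int where "k > 0" and hk: "\<bar>of_int k * \<theta> - of_int h - s\<bar> < min (e / - b) 1"
    using sequence_of_fractional_parts_is_dense[OF \<open>\<theta> \<notin> \<rat>\<close>] by metis
  have "of_int k * \<theta> > 0" using \<open>k > 0\<close> \<open>\<theta> > 0\<close> by simp
  then have "h \<ge> 0" using hk \<open>s < 0\<close> by linarith
  have "real (nat k + J) * a + real (nat h) * b - t = - b * (of_int k * \<theta> - of_int h - s)"
    using \<open>k > 0\<close> \<open>h \<ge> 0\<close> assms(2) by (simp add: \<theta>_def s_def field_simps)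
  then have "\<bar>real (nat k + J) * a + real (nat h) * b - t\<bar> = - b * \<bar>of_int k * \<theta> - of_int h - s\<bar>"
    using assms(2) by (simp add: abs_mult)
  also have "\<dots> < - b * (e / - b)" using hk assms(2) by (intro mult_strict_left_mono) simp_all
  also have "\<dots> = e" using assms(2) by simp
  finally show ?thesis by blast
qed

definition shear_coeff :: "(real \<Rightarrow> real) \<Rightarrow> nat \<Rightarrow> nat \<Rightarrow> real \<Rightarrow> real" where
  "shear_coeff \<sigma> k l = (if k < l then inv \<sigma> else \<sigma>)"

text \<open>For \<open>k < l\<close>, \<open>h\<^sub>k\<^sub>,\<^sub>l = shear \<sigma> k l\<close> and \<open>v\<^sub>k\<^sub>,\<^sub>l = shear \<sigma> l k\<close>.\<close>

definition shear :: "(real \<Rightarrow> real) \<Rightarrow> nat \<Rightarrow> nat \<Rightarrow> (nat \<Rightarrow> real) \<Rightarrow> nat \<Rightarrow> real" where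
  "shear \<sigma> k l x = x(k := x k + shear_coeff \<sigma> k l (x l))"

lemma shear_in_Mon:
  assumes "f \<in> Mon \<sigma> n" "k \<in> {1..n}" "l \<in> {1..n}" "k \<noteq> l"
  shows "shear \<sigma> k l \<circ> f \<in> Mon \<sigma> n"
proof (cases "k < l")
  case True
  then have "shear \<sigma> k l = hmap \<sigma> k l" by (auto simp: fun_eq_iff shear_def shear_coeff_def hmap_def)
  then show ?thesis using Mon_h[OF assms(1), of k l] assms True by auto
next
  case False
  then have "shear \<sigma> k l = vmap \<sigma> l k" by (auto simp: fun_eq_iff shear_def shear_coeff_def vmap_def)
  then show ?thesis using Mon_v[OF assms(1), of l k] assms False by auto
qed

lemma shear_MonImg:
  assumes "k \<in> {1..n}" "l \<in> {1..n}" "k \<noteq> l" "x \<in> MonImg \<sigma> n B"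
  shows "shear \<sigma> k l x \<in> MonImg \<sigma> n B"
proof -
  obtain m y where "m \<in> Mon \<sigma> n" "y \<in> B" "x = m y"
    using assms(4) unfolding MonImg_def by blast
  moreover have "shear \<sigma> k l x = (shear \<sigma> k l \<circ> m) y" using \<open>x = m y\<close> by simp
  ultimately show ?thesis
    using shear_in_Mon[of m \<sigma> n k l] assms(1-3) unfolding MonImg_def by blast
qed

lemma subset_MonImg: "B \<subseteq> MonImg \<sigma> n B"
proof
  fix x assume "x \<in> B"
  then have "x = id x \<and> id \<in> Mon \<sigma> n \<and> x \<in> B" using Mon_id by simp
  then show "x \<in> MonImg \<sigma> n B" unfolding MonImg_def by blast
qed

lemma Rn_update: "x \<in> Rn n \<Longrightarrow> k \<in> {1..n} \<Longrightarrow> x(k := v) \<in> Rn n"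
  unfolding Rn_def by auto

lemma minus_minus_fun: "- (- x) = (x :: 'a \<Rightarrow> 'b::group_add)"
  by (simp add: fun_eq_iff)

lemma uminus_Rn: "x \<in> Rn n \<Longrightarrow> - x \<in> Rn n"
  unfolding Rn_def by auto

locale odd_increasing_homeo =
  fixes \<sigma> :: "real \<Rightarrow> real"
  assumes strict_mono: "strict_mono \<sigma>" and odd: "\<forall>t. \<sigma> (- t) = - \<sigma> t"
    and homeo: "homeomorphism UNIV UNIV \<sigma> (inv \<sigma>)"
begin

lemma inv_apply: "inv \<sigma> (\<sigma> x) = x" and apply_inv: "\<sigma> (inv \<sigma> y) = y"
  and continuous: "continuous_on UNIV \<sigma>" and continuous_inv: "continuous_on UNIV (inv \<sigma>)"
  using homeo unfolding homeomorphism_def by auto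

lemma strict_mono_inv: "strict_mono (inv \<sigma>)"
proof (rule strict_monoI)
  fix x y :: real assume "x < y"
  then show "inv \<sigma> x < inv \<sigma> y"
    using strict_mono_less[OF strict_mono, of "inv \<sigma> x" "inv \<sigma> y"] by (simp add: apply_inv)
qed

lemma zero: "\<sigma> 0 = 0"
  using odd[rule_format, of 0] by simp

lemma inv_zero: "inv \<sigma> 0 = 0"
  using inv_apply[of 0] by (simp add: zero)

lemma inv_minus: "inv \<sigma> (- t) = - inv \<sigma> t"
proof -
  have "\<sigma> (- inv \<sigma> t) = - t" using odd by (simp add: apply_inv)
  then show ?thesis using inv_apply[of "- inv \<sigma> t"] by simp
qed

lemma strict_mono_shear_coeff: "strict_mono (shear_coeff \<sigma> k l)"
  unfolding shear_coeff_def using strict_mono strict_mono_inv by simp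

lemma shear_coeff_0 [simp]: "shear_coeff \<sigma> k l 0 = 0"
  unfolding shear_coeff_def by (simp add: zero inv_zero)

lemma shear_coeff_pos_iff [simp]: "shear_coeff \<sigma> k l t > 0 \<longleftrightarrow> t > 0"
  by (metis shear_coeff_0 strict_mono_less strict_mono_shear_coeff)

lemma shear_coeff_neg_iff [simp]: "shear_coeff \<sigma> k l t < 0 \<longleftrightarrow> t < 0"
  by (metis shear_coeff_0 strict_mono_less strict_mono_shear_coeff)

lemma shear_coeff_eq_0_iff [simp]: "shear_coeff \<sigma> k l t = 0 \<longleftrightarrow> t = 0"
  by (metis shear_coeff_0 strict_mono_eq strict_mono_shear_coeff)

lemma shear_coeff_nonneg_iff [simp]: "shear_coeff \<sigma> k l t \<ge> 0 \<longleftrightarrow> t \<ge> 0"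
  by (metis shear_coeff_0 strict_mono_less_eq strict_mono_shear_coeff)

lemma shear_coeff_nonpos_iff [simp]: "shear_coeff \<sigma> k l t \<le> 0 \<longleftrightarrow> t \<le> 0"
  by (metis shear_coeff_0 strict_mono_less_eq strict_mono_shear_coeff)

lemma shear_coeff_minus: "shear_coeff \<sigma> k l (- t) = - shear_coeff \<sigma> k l t"
  unfolding shear_coeff_def using odd inv_minus by simp

lemma continuous_on_shear_coeff: "continuous_on UNIV (shear_coeff \<sigma> k l)"
  unfolding shear_coeff_def using continuous continuous_inv by simp

lemma shear_coeff_small:
  assumes "e > 0"
  obtains d where "d > 0" "\<And>k l t. \<bar>t\<bar> < d \<Longrightarrow> \<bar>shear_coeff \<sigma> k l t\<bar> < e"
proof -
  have "isCont (\<lambda>t. \<bar>\<sigma> t\<bar> + \<bar>inv \<sigma> t\<bar>) 0"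
    using continuous continuous_inv by (intro continuous_intros) (simp_all add: continuous_on_eq_continuous_at)
  then obtain d where "d > 0" and d: "\<forall>t. dist t 0 < d \<longrightarrow> dist (\<bar>\<sigma> t\<bar> + \<bar>inv \<sigma> t\<bar>) (\<bar>\<sigma> 0\<bar> + \<bar>inv \<sigma> 0\<bar>) < e"
    using assms unfolding continuous_at_eps_delta by blast
  have "\<bar>shear_coeff \<sigma> k l t\<bar> < e" if "\<bar>t\<bar> < d" for k l t
    using d[rule_format, of t] that by (auto simp: dist_real_def zero inv_zero shear_coeff_def)
  then show ?thesis using \<open>d > 0\<close> that by blast
qed

lemma continuous_on_shear: "continuous_on UNIV (shear \<sigma> k l)"
proof (intro continuous_on_coordinatewise_then_product)
  fix i
  have "continuous_on UNIV (\<lambda>x::nat \<Rightarrow> real. x k + shear_coeff \<sigma> k l (x l))"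
    by (intro continuous_intros continuous_on_compose2[OF continuous_on_shear_coeff]) auto
  then show "continuous_on UNIV (\<lambda>x. shear \<sigma> k l x i)"
    unfolding shear_def by (cases "i = k") auto
qed

lemma shear_uminus: "shear \<sigma> k l (- x) = - shear \<sigma> k l x"
  by (auto simp: fun_eq_iff shear_def shear_coeff_minus)

end

locale shear_closed = odd_increasing_homeo +
  fixes n :: nat and C :: "(nat \<Rightarrow> real) set"
  assumes closed: "closed C"
    and shear_mem: "\<lbrakk>k \<in> {1..n}; l \<in> {1..n}; k \<noteq> l; x \<in> C\<rbrakk> \<Longrightarrow> shear \<sigma> k l x \<in> C"

lemma (in odd_increasing_homeo) shear_closed_closure:
  assumes "\<And>k l x. \<lbrakk>k \<in> {1..n}; l \<in> {1..n}; k \<noteq> l; x \<in> S\<rbrakk> \<Longrightarrow> shear \<sigma> k l x \<in> S"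
  shows "shear_closed \<sigma> n (closure S)"
proof unfold_locales
  fix k l x assume kl: "k \<in> {1..n}" "l \<in> {1..n}" "k \<noteq> l" and "x \<in> closure S"
  have "shear \<sigma> k l ` S \<subseteq> closure S" using assms[OF kl] closure_subset by blast
  then have "shear \<sigma> k l ` closure S \<subseteq> closure S"
    using image_closure_subset continuous_on_subset[OF continuous_on_shear] by (metis closed_closure subset_UNIV)
  then show "shear \<sigma> k l x \<in> closure S" using \<open>x \<in> closure S\<close> by blast
qed simp

context shear_closed
begin

lemma shear_closed_uminus: "shear_closed \<sigma> n (uminus -` C)"
proof unfold_locales
  have "continuous_on UNIV (uminus :: (nat \<Rightarrow> real) \<Rightarrow> _)"
    by (intro continuous_on_coordinatewise_then_product) (simp add: continuous_on_minus)
  then show "closed (uminus -` C)" using closed by (rule closed_vimage[rotated])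
qed (use shear_mem in \<open>simp add: shear_uminus[symmetric]\<close>)

lemma iterated_shear_mem:
  assumes "x \<in> C" "k \<in> {1..n}" "l \<in> {1..n}" "k \<noteq> l"
  shows "x(k := x k + real N * shear_coeff \<sigma> k l (x l)) \<in> C"
proof (induction N)
  case (Suc N)
  have step: "shear \<sigma> k l (x(k := x k + real N * shear_coeff \<sigma> k l (x l)))
      = x(k := x k + real (Suc N) * shear_coeff \<sigma> k l (x l))"
    using assms(4) by (simp add: shear_def fun_eq_iff algebra_simps)
  show ?case using shear_mem[OF assms(2-4) Suc] unfolding step .
qed (simp add: assms(1))

lemma approach_coord_mem:
  assumes "y \<in> C" "k \<in> {1..n}" "l \<in> {1..n}" "k \<noteq> l"
    and "shear_coeff \<sigma> k l (y l) \<noteq> 0" "(t - y k) * shear_coeff \<sigma> k l (y l) \<ge> 0"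
  shows "\<exists>v. y(k := v) \<in> C \<and> \<bar>v - t\<bar> < \<bar>shear_coeff \<sigma> k l (y l)\<bar>"
  using nat_multiple_approx[OF assms(5,6)] iterated_shear_mem[OF assms(1-4)] by blast

lemma approach_coord_mem_two_sided:
  assumes "y \<in> C" "k \<in> {1..n} - {P, N}" "P \<in> {1..n}" "N \<in> {1..n}" "y P > 0" "y N < 0"
    and "\<bar>shear_coeff \<sigma> k P (y P)\<bar> < \<eta>" "\<bar>shear_coeff \<sigma> k N (y N)\<bar> < \<eta>"
  shows "\<exists>v. y(k := v) \<in> C \<and> \<bar>v - t\<bar> < \<eta>"
proof (cases "y k \<le> t")
  case True
  have "(t - y k) * shear_coeff \<sigma> k P (y P) \<ge> 0" using True assms(5) by simp
  moreover have "shear_coeff \<sigma> k P (y P) \<noteq> 0" using assms(5) by simp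
  ultimately show ?thesis
    using approach_coord_mem[of y k P t] assms(1-3,7) by (metis Diff_iff insertCI less_trans)
next
  case False
  have "(t - y k) * shear_coeff \<sigma> k N (y N) \<ge> 0"
    using False assms(6) by (intro mult_nonpos_nonpos) simp_all
  moreover have "shear_coeff \<sigma> k N (y N) \<noteq> 0" using assms(6) by simp
  ultimately show ?thesis
    using approach_coord_mem[of y k N t] assms(1,2,4,8) by (metis Diff_iff insertCI less_trans)
qed

lemma approach_coords_mem:
  assumes "finite K" "K \<subseteq> {1..n} - {P, N}" "P \<in> {1..n}" "N \<in> {1..n}"
    and "y \<in> C" "y P > 0" "y N < 0"
    and "\<And>k. \<bar>shear_coeff \<sigma> k P (y P)\<bar> < \<eta>" "\<And>k. \<bar>shear_coeff \<sigma> k N (y N)\<bar> < \<eta>"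
  shows "\<exists>y'\<in>C. (\<forall>k\<in>K. \<bar>y' k - z k\<bar> < \<eta>) \<and> (\<forall>k. k \<notin> K \<longrightarrow> y' k = y k)"
  using assms(1,2)
proof (induction K rule: finite_induct)
  case (insert k K)
  then obtain y' where y': "y' \<in> C" "\<forall>k\<in>K. \<bar>y' k - z k\<bar> < \<eta>" "\<forall>k. k \<notin> K \<longrightarrow> y' k = y k"
    by auto
  have "y' P = y P" "y' N = y N" using y'(3) insert.prems by auto
  then obtain v where "y'(k := v) \<in> C" "\<bar>v - z k\<bar> < \<eta>"
    using approach_coord_mem_two_sided[of y' k P N \<eta> "z k"] y'(1) insert.prems assms(3-9) by auto
  then show ?case using y' by (intro bexI[of _ "y'(k := v)"]) auto
qed (use assms(5) in auto)

lemma update_mem_if_irrational_ratio: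
  assumes "y \<in> C" "k \<in> {1..n}" "l \<in> {1..n}" "m \<in> {1..n}" "k \<noteq> l" "k \<noteq> m"
    and "shear_coeff \<sigma> k l (y l) > 0" "shear_coeff \<sigma> k m (y m) < 0"
    and "shear_coeff \<sigma> k l (y l) / shear_coeff \<sigma> k m (y m) \<notin> \<rat>"
  shows "y(k := t) \<in> C"
proof (rule uniform_approx_in_closed[OF closed])
  fix e :: real assume "e > 0"
  let ?a = "shear_coeff \<sigma> k l (y l)" and ?b = "shear_coeff \<sigma> k m (y m)"
  obtain i j :: nat where ij: "\<bar>real i * ?a + real j * ?b - (t - y k)\<bar> < e"
    using nat_combination_dense[OF assms(7-9) \<open>e > 0\<close>] by blast
  define y' where "y' = y(k := y k + real j * ?b)"
  have "y' \<in> C" unfolding y'_def using iterated_shear_mem[OF assms(1,2,4,6)] .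
  then have "y'(k := y' k + real i * shear_coeff \<sigma> k l (y' l)) \<in> C"
    using iterated_shear_mem[OF _ assms(2,3,5)] by blast
  moreover have "y'(k := y' k + real i * shear_coeff \<sigma> k l (y' l)) = y(k := y k + real j * ?b + real i * ?a)"
    using assms(5) by (simp add: y'_def)
  ultimately show "\<exists>y'\<in>C. \<forall>i. \<bar>y' i - (y(k := t)) i\<bar> < e"
    using ij \<open>e > 0\<close> by (intro bexI[of _ "y(k := y k + real j * ?b + real i * ?a)"]) (auto simp: algebra_simps)
qed

end

definition pos_neg_near_zero :: "nat \<Rightarrow> (nat \<Rightarrow> real) set \<Rightarrow> nat \<Rightarrow> nat \<Rightarrow> bool" where
  "pos_neg_near_zero n C P N \<longleftrightarrow> (\<forall>e>0. \<exists>y\<in>C \<inter> Rn n. 0 < y P \<and> y P < e \<and> - e < y N \<and> y N < 0)"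

lemma pos_neg_near_zero_uminus:
  assumes "pos_neg_near_zero n C P N"
  shows "pos_neg_near_zero n (uminus -` C) N P"
  unfolding pos_neg_near_zero_def
proof (intro allI impI)
  fix e :: real assume "e > 0"
  then obtain y where "y \<in> C" "y \<in> Rn n" "0 < y P" "y P < e" "- e < y N" "y N < 0"
    using assms unfolding pos_neg_near_zero_def by blast
  then show "\<exists>y\<in>uminus -` C \<inter> Rn n. 0 < y N \<and> y N < e \<and> - e < y P \<and> y P < 0"
    by (intro bexI[of _ "- y"]) (auto simp: uminus_Rn minus_minus_fun)
qed

lemma pos_neg_near_zero_cases:
  assumes "\<And>e. e > 0 \<Longrightarrow> \<exists>y\<in>C \<inter> Rn n. \<bar>y P\<bar> < e \<and> \<bar>y N\<bar> < e \<and> y P * y N < 0"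
  shows "pos_neg_near_zero n C P N \<or> pos_neg_near_zero n C N P"
proof (rule ccontr)
  assume "\<not> ?thesis"
  then obtain e1 e2 where "e1 > 0" "e2 > 0"
    and no_PN: "\<not> (\<exists>y\<in>C \<inter> Rn n. 0 < y P \<and> y P < e1 \<and> - e1 < y N \<and> y N < 0)"
    and no_NP: "\<not> (\<exists>y\<in>C \<inter> Rn n. 0 < y N \<and> y N < e2 \<and> - e2 < y P \<and> y P < 0)"
    unfolding pos_neg_near_zero_def by blast
  obtain y where "y \<in> C \<inter> Rn n" "\<bar>y P\<bar> < min e1 e2" "\<bar>y N\<bar> < min e1 e2" "y P * y N < 0"
    using assms[of "min e1 e2"] \<open>e1 > 0\<close> \<open>e2 > 0\<close> by auto
  then show False using no_PN no_NP by (auto simp: mult_less_0_iff abs_less_iff)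
qed

locale pos_neg_shear_closed = shear_closed +
  fixes P N :: nat
  assumes P: "P \<in> {1..n}" and N: "N \<in> {1..n}" and P_ne_N: "P \<noteq> N"
    and pos_neg: "pos_neg_near_zero n C P N"
begin

lemma mem_if_P_zero:
  assumes "z \<in> Rn n" "z P = 0" "z N \<ge> 0"
  shows "z \<in> C"
proof (rule uniform_approx_in_closed[OF closed])
  fix e :: real assume "e > 0"
  then obtain d where "d > 0" and d: "\<And>k l t. \<bar>t\<bar> < d \<Longrightarrow> \<bar>shear_coeff \<sigma> k l t\<bar> < e"
    using shear_coeff_small by blast
  then have "min d e > 0" using \<open>e > 0\<close> by simp
  then obtain y where y: "y \<in> C" "y \<in> Rn n" "0 < y P" "y P < min d e" "- min d e < y N" "y N < 0"
    using pos_neg unfolding pos_neg_near_zero_def by blast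
  have "\<bar>y P\<bar> < d" "\<bar>y N\<bar> < d" using y(3-6) by auto
  then have small: "\<bar>shear_coeff \<sigma> k P (y P)\<bar> < e" "\<bar>shear_coeff \<sigma> k N (y N)\<bar> < e" for k
    using d by blast+
  define K where "K = {1..n} - {P, N}"
  have "finite K" "K \<subseteq> {1..n} - {P, N}" by (simp_all add: K_def)
  then obtain y' where y': "y' \<in> C" "\<forall>k\<in>K. \<bar>y' k - z k\<bar> < e" "\<forall>k. k \<notin> K \<longrightarrow> y' k = y k"
    using approach_coords_mem[where z = z, OF _ _ P N y(1,3,6) small] by blast
  have y'PN: "y' P = y P" "y' N = y N" using y'(3) by (auto simp: K_def)
  txt \<open>The \<open>N\<close>-coordinate can only be moved upwards, by the steps coming from \<open>y P > 0\<close>.\<close>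
  have "(z N - y' N) * shear_coeff \<sigma> N P (y' P) \<ge> 0"
    using assms(3) y(3,6) y'PN by (intro mult_nonneg_nonneg) simp_all
  moreover have "shear_coeff \<sigma> N P (y' P) \<noteq> 0" using y(3) y'PN by simp
  ultimately obtain v where v: "y'(N := v) \<in> C" "\<bar>v - z N\<bar> < \<bar>shear_coeff \<sigma> N P (y' P)\<bar>"
    using approach_coord_mem[OF y'(1) N P P_ne_N[symmetric]] by blast
  have "\<bar>(y'(N := v)) k - z k\<bar> < e" for k
  proof -
    consider "k = N" | "k = P" | "k \<in> K" | "k \<notin> {1..n}" unfolding K_def by blast
    then show ?thesis
    proof cases
      case 1
      then show ?thesis using v(2) small(1)[of N] y'PN by simp
    next
      case 2
      then show ?thesis using P_ne_N y'PN y(3,4) assms(2) by simp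
    next
      case 3
      then show ?thesis using y'(2) by (auto simp: K_def)
    next
      case 4
      then have "(y'(N := v)) k = y k" using y'(3) N by (auto simp: K_def)
      moreover have "y k = 0" "z k = 0" using 4 y(2) assms(1) by (simp_all add: Rn_def)
      ultimately show ?thesis using \<open>e > 0\<close> by simp
    qed
  qed
  then show "\<exists>y\<in>C. \<forall>k. \<bar>y k - z k\<bar> < e" using v(1) by blast
qed

lemma mem_if_N_nonneg_and_neg_coord:
  assumes "x \<in> Rn n" "x N \<ge> 0" "m \<in> {1..n} - {P, N}" "x m < 0"
  shows "x \<in> C"
proof (rule uniform_approx_in_closed[OF closed])
  fix e :: real assume "e > 0"
  let ?b = "shear_coeff \<sigma> P m (x m)"
  have "?b < 0" using assms(4) by simp
  moreover have "inj (shear_coeff \<sigma> P N)" using strict_mono_shear_coeff by (rule strict_mono_imp_inj_on)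
  ultimately have "inj_on (\<lambda>t. shear_coeff \<sigma> P N t / ?b) {x N<..<x N + e}"
    by (auto intro!: inj_onI simp: inj_eq)
  then have "\<exists>t\<in>{x N<..<x N + e}. shear_coeff \<sigma> P N t / ?b \<notin> \<rat>"
    using \<open>e > 0\<close> by (intro exists_irrational_value) (simp_all add: uncountable_open_interval)
  then obtain t where t: "t \<in> {x N<..<x N + e}" "shear_coeff \<sigma> P N t / ?b \<notin> \<rat>" by blast
  let ?z = "x(N := t, P := 0)"
  have "?z \<in> C"
    using assms(1,2) t(1) P N P_ne_N by (intro mem_if_P_zero Rn_update) auto
  then have "?z(P := x P) \<in> C"
  proof (rule update_mem_if_irrational_ratio[OF _ P N _ P_ne_N])
    show "m \<in> {1..n}" "P \<noteq> m" using assms(3) by auto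
    show "shear_coeff \<sigma> P N (?z N) > 0" using P_ne_N assms(2) t(1) by simp
    show "shear_coeff \<sigma> P m (?z m) < 0" using assms(3,4) by simp
    show "shear_coeff \<sigma> P N (?z N) / shear_coeff \<sigma> P m (?z m) \<notin> \<rat>" using t(2) assms(3) P_ne_N by simp
  qed
  moreover have "?z(P := x P) = x(N := t)" using P_ne_N by (auto simp: fun_eq_iff)
  ultimately have "x(N := t) \<in> C" by simp
  then show "\<exists>y\<in>C. \<forall>k. \<bar>y k - x k\<bar> < e" using t(1) \<open>e > 0\<close> by (intro bexI[of _ "x(N := t)"]) auto
qed

lemma mem_if_N_pos:
  assumes "x \<in> Rn n" "x N > 0" "m \<in> {1..n} - {P, N}"
  shows "x \<in> C"
proof -
  let ?\<gamma> = "shear_coeff \<sigma> m N (x N)"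
  have "?\<gamma> > 0" using assms(2) by simp
  then obtain M :: nat where M: "x m < real M * ?\<gamma>" using ex_less_of_nat_mult by blast
  define x' where "x' = x(m := x m - real M * ?\<gamma>)"
  have "x' \<in> Rn n" using assms(1,3) by (simp add: x'_def Rn_update)
  moreover have "x' N = x N" "x' m < 0" using assms(3) M by (auto simp: x'_def)
  ultimately have "x' \<in> C" using assms(2,3) by (intro mem_if_N_nonneg_and_neg_coord) auto
  then have "x'(m := x' m + real M * shear_coeff \<sigma> m N (x' N)) \<in> C"
    using iterated_shear_mem assms(3) N by auto
  moreover have "x'(m := x' m + real M * shear_coeff \<sigma> m N (x' N)) = x"
    using assms(3) by (auto simp: x'_def)
  ultimately show ?thesis by simp
qed

end

context shear_closed
begin

lemma quadrant_subset_if_pos_neg: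
  assumes "n \<ge> 3" "P \<in> {1..n}" "N \<in> {1..n}" "P \<noteq> N" "pos_neg_near_zero n C P N"
  shows "{x \<in> Rn n. x P * x N > 0} \<subseteq> C"
proof
  define m :: nat where "m = (if 1 \<notin> {P, N} then 1 else if 2 \<notin> {P, N} then 2 else 3)"
  have m: "m \<in> {1..n} - {P, N}" unfolding m_def using assms(1,4) by auto
  interpret pos_neg_shear_closed \<sigma> n C P N
    using assms(2-5) by unfold_locales auto
  interpret neg: pos_neg_shear_closed \<sigma> n "uminus -` C" N P
    using shear_closed_uminus pos_neg_near_zero_uminus[OF assms(5)] assms(2-4)
    by (simp add: pos_neg_shear_closed_def pos_neg_shear_closed_axioms_def)
  fix x assume "x \<in> {x \<in> Rn n. x P * x N > 0}"
  then have x: "x \<in> Rn n" "x N > 0 \<or> x P < 0" by (auto simp: zero_less_mult_iff)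
  show "x \<in> C"
  proof (cases "x N > 0")
    case True
    then show ?thesis using mem_if_N_pos[OF x(1) _ m] by blast
  next
    case False
    then have "- x \<in> uminus -` C"
      using x m by (intro neg.mem_if_N_pos[of _ m] uminus_Rn) auto
    then show ?thesis by (simp add: minus_minus_fun)
  qed
qed

lemma quadrant_subset:
  assumes "n \<ge> 3" "P \<in> {1..n}" "N \<in> {1..n}" "P \<noteq> N"
    and "\<And>e. e > 0 \<Longrightarrow> \<exists>y\<in>C \<inter> Rn n. \<bar>y P\<bar> < e \<and> \<bar>y N\<bar> < e \<and> y P * y N < 0"
  shows "{x \<in> Rn n. x P * x N > 0} \<subseteq> C"
  using pos_neg_near_zero_cases[OF assms(5)]
proof
  assume "pos_neg_near_zero n C P N"
  then show ?thesis by (rule quadrant_subset_if_pos_neg[OF assms(1-4)])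
next
  assume "pos_neg_near_zero n C N P"
  then have "{x \<in> Rn n. x N * x P > 0} \<subseteq> C"
    by (rule quadrant_subset_if_pos_neg[OF assms(1,3,2) assms(4)[symmetric]])
  then show ?thesis by (simp add: mult.commute)
qed

end

theorem lemma5:
  fixes \<sigma> :: "real \<Rightarrow> real" and n i j :: nat and B :: "(nat \<Rightarrow> real) set" and p :: "nat \<Rightarrow> real"
  assumes "n \<ge> 3"
    and "strict_mono \<sigma>" and "\<forall>t. \<sigma> (- t) = - \<sigma> t"
    and "homeomorphism UNIV UNIV \<sigma> (inv \<sigma>)"
    and "1 \<le> i" and "i < j" and "j \<le> n"
    and "B \<subseteq> Rn n"
    and "\<forall>x\<in>B. x i * x j < 0"
    and "p \<in> closure B" and "p i = 0" and "p j = 0"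
  shows "{x \<in> Rn n. x i * x j > 0} \<subseteq> closure (MonImg \<sigma> n B)"
proof -
  interpret odd_increasing_homeo \<sigma> using assms(2-4) by unfold_locales
  interpret shear_closed \<sigma> n "closure (MonImg \<sigma> n B)"
    using shear_MonImg by (rule shear_closed_closure)
  have B: "B \<subseteq> closure (MonImg \<sigma> n B) \<inter> Rn n"
    using subset_MonImg closure_subset assms(8) by blast
  have "\<exists>y\<in>closure (MonImg \<sigma> n B) \<inter> Rn n. \<bar>y i\<bar> < e \<and> \<bar>y j\<bar> < e \<and> y i * y j < 0"
    if "e > 0" for e
  proof -
    obtain y where "y \<in> B" "\<forall>k\<in>{i, j}. \<bar>y k - p k\<bar> < e"
      using closure_approx_on_finite_coords[OF assms(10) _ \<open>e > 0\<close>, of "{i, j}"] by blast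
    then show ?thesis using B assms(9,11,12) by (intro bexI[of _ y]) auto
  qed
  moreover have "i \<in> {1..n}" "j \<in> {1..n}" "i \<noteq> j" using assms(5-7) by auto
  ultimately show ?thesis using quadrant_subset[OF assms(1)] by blast
qed

end
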